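(* Let $0<\mu<\min\{4,N\}$, $\Omega$ satisfy $(A_\rho)$, $f\in\hat F$ with $\|f\|_{H^{-1}}<e_{00}$, and let $u_1$ be the positive bounded solution of $(P_f)$ with $u_1\in\mathcal N_f^+$, $\mathcal J_f(u_1)=\Upsilon_f$. Then there is a constant $\hat C>0$ such that for every $\Theta<1$ and every bounded set of $t\ge0$, $$b(u_1+tg_\rho^{\varepsilon,\sigma})\ge b(u_1)+b(tg_\rho^{\varepsilon,\sigma})+\hat C t^{2\cdot2^*_\mu-1}\int_\Omega\int_\Omega\frac{(g_\rho^{\varepsilon,\sigma}(x))^{2^*_\mu}(g_\rho^{\varepsilon,\sigma}(y))^{2^*_\mu-1}u_1(y)}{|x-y|^\mu}dxdy+2\cdot2^*_\mu\,t\int_\Omega\int_\Omega\frac{(u_1(x))^{2^*_\mu}(u_1(y))^{2^*_\mu-1}g_\rho^{\varepsilon,\sigma}(y)}{|x-y|^\mu}dxdy-O\big(\varepsilon^{\frac{2N-\mu}{4}\Theta}\big)$$ as $\varepsilon\to0^+$.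
   Context: $N\ge3$, $2^*_\mu=\frac{2N-\mu}{N-2}$, $u^+=\max(u,0)$. $(A_\rho)$, $\rho\in(0,\frac12)$: $\Omega$ smooth bounded with $\{\rho<|x|<1/\rho\}\subset\Omega$ and $\{|x|<\rho\}\not\subseteq\overline\Omega$. $a(u)=\int_\Omega|\nabla u|^2$, $b(u)=\int_\Omega\int_\Omega\frac{(u^+(x))^{2^*_\mu}(u^+(y))^{2^*_\mu}}{|x-y|^\mu}dxdy$, $\hat F=\{f\in L^\infty(\Omega):f\ge0,f\not\equiv0\}$, $\mathcal J_f(u)=\frac12a(u)-\frac1{2\cdot2^*_\mu}b(u)-\int_\Omega fu$, $(P_f)$ its Euler–Lagrange equation with Dirichlet condition, $\mathcal N_f=\{u\ne0:u^+\not\equiv0,\langle\mathcal J_f'(u),u\rangle=0\}$, $\mathcal N_f^+=\{u\in\mathcal N_f:\frac{d^2}{dt^2}\mathcal J_f(tu)|_{t=1}>0\}$, $\Upsilon_f=\inf_{\mathcal N_f}\mathcal J_f$. $S_{H,L}$ the Hardy–Littlewood–Sobolev best constant; $e_{00}=C_{N,\mu}S_{H,L}^{\frac{2^*_\mu}{2\cdot2^*_\mu-2}}$, $C_{N,\mu}=(\frac1{2\cdot2^*_\mu-1})^{\frac{2\cdot2^*_\mu-1}{2\cdot2^*_\mu-2}}(2\cdot2^*_\mu-2)$. $g_\rho^{\varepsilon,\sigma}=\upsilon_\rho u_\varepsilon^\sigma$ where $\upsilon_\rho\in C_c^\infty$ radial, $0\le\upsilon_\rho\le1$, $=0$ for $|x|<\frac{3\rho}2$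 and $|x|\ge\frac3{4\rho}$, $=1$ for $2\rho\le|x|\le\frac1{2\rho}$, and $u_\varepsilon^\sigma(x)=c_{N,\mu}\frac{(N(N-2)\varepsilon^2)^{(N-2)/4}}{(\varepsilon^2+|x-(1-\varepsilon)\sigma|^2)^{(N-2)/2}}$, $\sigma\in\mathbb S^{N-1}$, $0<\varepsilon\le1$, normalized minimizers of $S_{H,L}$. *)

theory Defs
  imports "HOL-Analysis.Analysis"
begin

text \<open>Points of R^N are elements of a Euclidean space 'a, N = DIM('a).\<close>

coinductive smooth_on :: "'a::euclidean_space set \<Rightarrow> ('a \<Rightarrow> real) \<Rightarrow> bool" where
  "f differentiable_on S \<Longrightarrow> (\<And>v. smooth_on S (\<lambda>x. frechet_derivative f (at x) v))
     \<Longrightarrow> smooth_on S f"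

definition grad :: "('a::euclidean_space \<Rightarrow> real) \<Rightarrow> 'a \<Rightarrow> 'a" where
  "grad \<phi> x = (\<Sum>i\<in>Basis. frechet_derivative \<phi> (at x) i *\<^sub>R i)"

definition test_fun :: "'a::euclidean_space set \<Rightarrow> ('a \<Rightarrow> real) \<Rightarrow> bool" where
  "test_fun \<Omega> \<phi> \<longleftrightarrow> smooth_on UNIV \<phi> \<and> compact (closure {x. \<phi> x \<noteq> 0})
      \<and> closure {x. \<phi> x \<noteq> 0} \<subseteq> \<Omega>"

definition smooth_bounded_domain :: "'a::euclidean_space set \<Rightarrow> bool" where
  "smooth_bounded_domain \<Omega> \<longleftrightarrow> open \<Omega> \<and> bounded \<Omega> \<and> \<Omega> \<noteq> {} \<and>
     (\<forall>p\<in>frontier \<Omega>. \<exists>U \<phi>. open U \<and> p \<in> U \<and> smooth_on U \<phi> \<and>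
        (\<forall>x\<in>U. frechet_derivative \<phi> (at x) \<noteq> (\<lambda>_. 0)) \<and>
        \<Omega> \<inter> U = {x\<in>U. \<phi> x < 0})"

definition cond_A :: "real \<Rightarrow> 'a::euclidean_space set \<Rightarrow> bool" where
  "cond_A \<rho> \<Omega> \<longleftrightarrow> 0 < \<rho> \<and> \<rho> < 1/2 \<and> smooth_bounded_domain \<Omega> \<and>
     {x. \<rho> < norm x \<and> norm x < 1/\<rho>} \<subseteq> \<Omega> \<and> \<not> ({x. norm x < \<rho>} \<subseteq> closure \<Omega>)"

definition L2 :: "('a::euclidean_space \<Rightarrow> real) \<Rightarrow> bool" where
  "L2 u \<longleftrightarrow> u \<in> borel_measurable lborel \<and> integrable lborel (\<lambda>x. (u x)\<^sup>2)"

definition L2v :: "('a::euclidean_space \<Rightarrow> 'a) \<Rightarrow> bool" where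
  "L2v G \<longleftrightarrow> G \<in> borel_measurable lborel \<and> integrable lborel (\<lambda>x. (norm (G x))\<^sup>2)"

text \<open>u (extended by zero) lies in H_0^1(Omega) with weak gradient G: it is the H^1-limit
  of test functions supported in Omega.\<close>
definition H01_grad :: "'a::euclidean_space set \<Rightarrow> ('a \<Rightarrow> real) \<Rightarrow> ('a \<Rightarrow> 'a) \<Rightarrow> bool" where
  "H01_grad \<Omega> u G \<longleftrightarrow> L2 u \<and> L2v G \<and>
     (\<exists>\<phi>::nat \<Rightarrow> 'a \<Rightarrow> real. (\<forall>n. test_fun \<Omega> (\<phi> n)) \<and>
        (\<lambda>n. LINT x|lborel. (\<phi> n x - u x)\<^sup>2) \<longlonglongrightarrow> 0 \<and>
        (\<lambda>n. LINT x|lborel. (norm (grad (\<phi> n) x - G x))\<^sup>2) \<longlonglongrightarrow> 0)"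

definition H01 :: "'a::euclidean_space set \<Rightarrow> ('a \<Rightarrow> real) \<Rightarrow> bool" where
  "H01 \<Omega> u \<longleftrightarrow> (\<exists>G. H01_grad \<Omega> u G)"

definition wgrad :: "'a::euclidean_space set \<Rightarrow> ('a \<Rightarrow> real) \<Rightarrow> 'a \<Rightarrow> 'a" where
  "wgrad \<Omega> u = (SOME G. H01_grad \<Omega> u G)"

definition crit :: "'a::euclidean_space itself \<Rightarrow> real \<Rightarrow> real" where
  "crit _ \<mu> = (2 * real DIM('a) - \<mu>) / (real DIM('a) - 2)"

definition a_fun :: "'a::euclidean_space set \<Rightarrow> ('a \<Rightarrow> real) \<Rightarrow> real" where
  "a_fun \<Omega> u = (LINT x:\<Omega>|lborel. (norm (wgrad \<Omega> u x))\<^sup>2)"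

definition dbl :: "'a::euclidean_space set \<Rightarrow> ('a \<Rightarrow> 'a \<Rightarrow> real) \<Rightarrow> real" where
  "dbl \<Omega> F = set_lebesgue_integral (lborel \<Otimes>\<^sub>M lborel) (\<Omega> \<times> \<Omega>) (\<lambda>(x, y). F x y)"

definition b_fun :: "'a::euclidean_space set \<Rightarrow> real \<Rightarrow> ('a \<Rightarrow> real) \<Rightarrow> real" where
  "b_fun \<Omega> \<mu> u = dbl \<Omega> (\<lambda>x y. (max (u x) 0) powr crit TYPE('a) \<mu> * (max (u y) 0) powr crit TYPE('a) \<mu>
                                  / (norm (x - y)) powr \<mu>)"

definition J_fun :: "'a::euclidean_space set \<Rightarrow> real \<Rightarrow> ('a \<Rightarrow> real) \<Rightarrow> ('a \<Rightarrow> real) \<Rightarrow> real" where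
  "J_fun \<Omega> \<mu> f u = a_fun \<Omega> u / 2 - b_fun \<Omega> \<mu> u / (2 * crit TYPE('a) \<mu>)
                    - (LINT x:\<Omega>|lborel. f x * u x)"

definition hatF :: "'a::euclidean_space set \<Rightarrow> ('a \<Rightarrow> real) set" where
  "hatF \<Omega> = {f. f \<in> borel_measurable lborel \<and>
                  (\<exists>M. AE x in lborel. x \<in> \<Omega> \<longrightarrow> \<bar>f x\<bar> \<le> M) \<and>
                  (AE x in lborel. x \<in> \<Omega> \<longrightarrow> 0 \<le> f x) \<and>
                  \<not> (AE x in lborel. x \<in> \<Omega> \<longrightarrow> f x = 0)}"

definition Hm1_norm :: "'a::euclidean_space set \<Rightarrow> ('a \<Rightarrow> real) \<Rightarrow> real" where
  "Hm1_norm \<Omega> f = Sup {\<bar>LINT x:\<Omega>|lborel. f x * u x\<bar> | u. H01 \<Omega> u \<and> a_fun \<Omega> u \<le> 1}"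

text \<open>weak solution of (P_f): -Delta u = (int (u^+(y))^p/|x-y|^mu dy) (u^+)^(p-1) + f in Omega, u = 0 on the boundary\<close>
definition weak_solution :: "'a::euclidean_space set \<Rightarrow> real \<Rightarrow> ('a \<Rightarrow> real) \<Rightarrow> ('a \<Rightarrow> real) \<Rightarrow> bool" where
  "weak_solution \<Omega> \<mu> f u \<longleftrightarrow> H01 \<Omega> u \<and>
     (\<forall>\<phi>. test_fun \<Omega> \<phi> \<longrightarrow>
        (LINT x:\<Omega>|lborel. wgrad \<Omega> u x \<bullet> grad \<phi> x)
        - dbl \<Omega> (\<lambda>x y. (max (u x) 0) powr crit TYPE('a) \<mu> * (max (u y) 0) powr (crit TYPE('a) \<mu> - 1)
                         * \<phi> y / (norm (x - y)) powr \<mu>)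
        - (LINT x:\<Omega>|lborel. f x * \<phi> x) = 0)"

text \<open>Nehari set: <J_f'(u),u> = d/ds J_f(su) at s = 1\<close>
definition Nehari :: "'a::euclidean_space set \<Rightarrow> real \<Rightarrow> ('a \<Rightarrow> real) \<Rightarrow> ('a \<Rightarrow> real) set" where
  "Nehari \<Omega> \<mu> f = {u. H01 \<Omega> u \<and> \<not> (AE x in lborel. u x = 0) \<and>
                       \<not> (AE x in lborel. max (u x) 0 = 0) \<and>
                       ((\<lambda>s. J_fun \<Omega> \<mu> f (\<lambda>x. s * u x)) has_real_derivative 0) (at 1)}"

definition Nehari_plus :: "'a::euclidean_space set \<Rightarrow> real \<Rightarrow> ('a \<Rightarrow> real) \<Rightarrow> ('a \<Rightarrow> real) set" where
  "Nehari_plus \<Omega> \<mu> f = {u \<in> Nehari \<Omega> \<mu> f. \<exists>D d.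
       (\<forall>\<^sub>F s in nhds 1. ((\<lambda>s. J_fun \<Omega> \<mu> f (\<lambda>x. s * u x)) has_real_derivative D s) (at s)) \<and>
       (D has_real_derivative d) (at 1) \<and> d > 0}"

definition Upsilon :: "'a::euclidean_space set \<Rightarrow> real \<Rightarrow> ('a \<Rightarrow> real) \<Rightarrow> ereal" where
  "Upsilon \<Omega> \<mu> f = (INF v\<in>Nehari \<Omega> \<mu> f. ereal (J_fun \<Omega> \<mu> f v))"

definition a_RN :: "('a::euclidean_space \<Rightarrow> real) \<Rightarrow> real" where
  "a_RN \<phi> = (LINT x|lborel. (norm (grad \<phi> x))\<^sup>2)"

definition b_RN :: "real \<Rightarrow> ('a::euclidean_space \<Rightarrow> real) \<Rightarrow> real" where
  "b_RN \<mu> \<phi> = integral\<^sup>L (lborel \<Otimes>\<^sub>M lborel)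
      (\<lambda>(x, y). \<bar>\<phi> x\<bar> powr crit TYPE('a) \<mu> * \<bar>\<phi> y\<bar> powr crit TYPE('a) \<mu> / (norm (x - y)) powr \<mu>)"

text \<open>best constant S_{H,L} (infimum over C_c^infinity(R^N), dense in D^{1,2})\<close>
definition S_HL :: "'a::euclidean_space itself \<Rightarrow> real \<Rightarrow> real" where
  "S_HL _ \<mu> = Inf {a_RN \<phi> / (b_RN \<mu> \<phi>) powr (1 / crit TYPE('a) \<mu>) | \<phi>::'a \<Rightarrow> real.
                    test_fun UNIV \<phi> \<and> (\<exists>x. \<phi> x \<noteq> 0)}"

definition C_Nmu :: "'a::euclidean_space itself \<Rightarrow> real \<Rightarrow> real" where
  "C_Nmu _ \<mu> = (let p = crit TYPE('a) \<mu> in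
      (1 / (2 * p - 1)) powr ((2 * p - 1) / (2 * p - 2)) * (2 * p - 2))"

definition e00 :: "'a::euclidean_space itself \<Rightarrow> real \<Rightarrow> real" where
  "e00 _ \<mu> = (let p = crit TYPE('a) \<mu> in
      C_Nmu TYPE('a) \<mu> * S_HL TYPE('a) \<mu> powr (p / (2 * p - 2)))"

definition bubble1 :: "'a::euclidean_space \<Rightarrow> real" where
  "bubble1 x = (let N = real DIM('a) in
      (N * (N - 2)) powr ((N - 2) / 4) / (1 + (norm x)\<^sup>2) powr ((N - 2) / 2))"

text \<open>normalisation constant c_{N,mu}: c * bubble1 satisfies a = b on R^N, i.e. solves
  -Delta u = (|x|^(-mu) * |u|^p) |u|^(p-2) u (normalized minimizer of S_{H,L})\<close>
definition c_Nmu :: "'a::euclidean_space itself \<Rightarrow> real \<Rightarrow> real" where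
  "c_Nmu _ \<mu> = (a_RN (bubble1 :: 'a \<Rightarrow> real) / b_RN \<mu> (bubble1 :: 'a \<Rightarrow> real))
                  powr (1 / (2 * crit TYPE('a) \<mu> - 2))"

definition u_eps :: "real \<Rightarrow> real \<Rightarrow> 'a \<Rightarrow> 'a::euclidean_space \<Rightarrow> real" where
  "u_eps \<mu> \<epsilon> \<sigma> x = (let N = real DIM('a) in
      c_Nmu TYPE('a) \<mu> * (N * (N - 2) * \<epsilon>\<^sup>2) powr ((N - 2) / 4)
        / (\<epsilon>\<^sup>2 + (norm (x - (1 - \<epsilon>) *\<^sub>R \<sigma>))\<^sup>2) powr ((N - 2) / 2))"

definition cutoff :: "real \<Rightarrow> ('a::euclidean_space \<Rightarrow> real) \<Rightarrow> bool" where
  "cutoff \<rho> \<upsilon> \<longleftrightarrow> test_fun UNIV \<upsilon> \<and> (\<forall>x y. norm x = norm y \<longrightarrow> \<upsilon> x = \<upsilon> y) \<and>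
     (\<forall>x. 0 \<le> \<upsilon> x \<and> \<upsilon> x \<le> 1) \<and>
     (\<forall>x. norm x < 3 * \<rho> / 2 \<or> norm x \<ge> 3 / (4 * \<rho>) \<longrightarrow> \<upsilon> x = 0) \<and>
     (\<forall>x. 2 * \<rho> \<le> norm x \<and> norm x \<le> 1 / (2 * \<rho>) \<longrightarrow> \<upsilon> x = 1)"

definition g_fun :: "('a::euclidean_space \<Rightarrow> real) \<Rightarrow> real \<Rightarrow> real \<Rightarrow> 'a \<Rightarrow> 'a \<Rightarrow> real" where
  "g_fun \<upsilon> \<mu> \<epsilon> \<sigma> x = \<upsilon> x * u_eps \<mu> \<epsilon> \<sigma> x"

end

theory Submission
  imports Defs
begin

text \<open>Write p = 2*_\<mu>; then p \<ge> 2 because \<mu> < 4. For a, b, c, d \<ge> 0, Bernoulli's inequality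
  and the superadditivity of s \<mapsto> s^q (q \<ge> 1) give
    (a + b)^p (c + d)^p \<ge> a^p c^p + b^p d^p + p a^p c^(p-1) d + p c^p a^(p-1) b + p b^p d^(p-1) c.
  Put a = u1(x), c = u1(y), b = t g(x), d = t g(y), divide by |x - y|^\<mu> and integrate over
  \<Omega> \<times> \<Omega>. Every term is integrable, since u1 and g are bounded and the Riesz kernel
  |x - y|^(-\<mu>) is integrable over bounded sets when \<mu> < N; the two mixed terms have the
  same integral by the symmetry x \<leftrightarrow> y. So the estimate holds with C = p and no error term.\<close>

section \<open>Elementary inequalities for real powers\<close>

lemma one_plus_powr_ge:
  fixes s q :: real
  assumes "0 \<le> s" "1 \<le> q"
  shows "1 + q * s \<le> (1 + s) powr q"
proof -
  let ?h = "\<lambda>x::real. (1 + x) powr q - 1 - q * x"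
  have "?h 0 \<le> ?h s"
  proof (rule DERIV_nonneg_imp_nondecreasing[of 0 s ?h])
    fix x assume x: "0 \<le> x" "x \<le> s"
    show "\<exists>y. (?h has_real_derivative y) (at x) \<and> 0 \<le> y"
    proof (intro exI conjI)
      show "(?h has_real_derivative (q * (1 + x) powr (q - 1) * 1 - 0 - q * 1)) (at x)"
        using x by (auto intro!: derivative_eq_intros)
      have "1 \<le> (1 + x) powr (q - 1)"
        using x assms by (intro ge_one_powr_ge_zero) auto
      then show "0 \<le> q * (1 + x) powr (q - 1) * 1 - 0 - q * 1"
        using assms by (simp add: algebra_simps)
    qed
  qed (use assms in auto)
  then show ?thesis by simp
qed

lemma add_powr_ge_tangent:
  fixes c d q :: real
  assumes "0 \<le> c" "0 \<le> d" "1 \<le> q"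
  shows "c powr q + q * c powr (q - 1) * d \<le> (c + d) powr q"
proof (cases "c = 0")
  case True
  then show ?thesis using assms by simp
next
  case False
  then have c: "0 < c" using assms by simp
  have "c powr q + q * c powr (q - 1) * d = c powr q * (1 + q * (d / c))"
    using c by (simp add: powr_diff field_simps)
  also have "\<dots> \<le> c powr q * (1 + d / c) powr q"
    using one_plus_powr_ge[of "d / c" q] c assms by (intro mult_left_mono) auto
  also have "\<dots> = (c * (1 + d / c)) powr q"
    using c assms by (simp add: powr_mult)
  also have "c * (1 + d / c) = c + d"
    using c by (simp add: field_simps)
  finally show ?thesis .
qed

lemma powr_superadditive:
  fixes a b q :: real
  assumes "0 \<le> a" "0 \<le> b" "1 \<le> q"
  shows "a powr q + b powr q \<le> (a + b) powr q"
proof -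
  have le: "x powr q \<le> (a + b) powr (q - 1) * x" if "0 \<le> x" "x \<le> a + b" for x
  proof (cases "x = 0")
    case False
    then have "x powr q = x powr (q - 1) * x" using that by (simp add: powr_diff)
    also have "\<dots> \<le> (a + b) powr (q - 1) * x"
      using that assms by (intro mult_right_mono powr_mono2) auto
    finally show ?thesis .
  qed (use assms in simp)
  have "a powr q + b powr q \<le> (a + b) powr (q - 1) * a + (a + b) powr (q - 1) * b"
    using le[of a] le[of b] assms by simp
  also have "\<dots> = (a + b) * (a + b) powr (q - 1)"
    by (simp add: algebra_simps)
  also have "\<dots> = (a + b) powr q"
    using assms by (simp add: powr_mult_base)
  finally show ?thesis .
qed

lemma add_powr_ge_cross_term:
  fixes a b p :: real
  assumes "0 \<le> a" "0 \<le> b" "2 \<le> p"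
  shows "a powr p + b powr p + p * a powr (p - 1) * b \<le> (a + b) powr p"
proof -
  have x_powr: "x * x powr (p - 1) = x powr p" if "0 \<le> x" for x :: real
    using that by (simp add: powr_mult_base)
  have "a powr p + b powr p + p * a powr (p - 1) * b
      = a * (a powr (p - 1) + (p - 1) * a powr (p - 1 - 1) * b) + b * (a powr (p - 1) + b powr (p - 1))"
  proof -
    have "a * ((p - 1) * a powr (p - 1 - 1) * b) = (p - 1) * (a * a powr (p - 1 - 1)) * b"
      by (simp only: ac_simps)
    also have "\<dots> = (p - 1) * a powr (p - 1) * b"
      using assms powr_mult_base[of a "p - 1 - 1"] by simp
    finally show ?thesis
      using x_powr[of a] x_powr[of b] assms by (simp add: algebra_simps)
  qed
  also have "\<dots> \<le> a * (a + b) powr (p - 1) + b * (a + b) powr (p - 1)"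
    using add_powr_ge_tangent[of a b "p - 1"] powr_superadditive[of a b "p - 1"] assms
    by (intro add_mono mult_left_mono) auto
  also have "\<dots> = (a + b) powr p"
    using x_powr[of "a + b"] assms by (simp add: algebra_simps)
  finally show ?thesis .
qed

lemma add_powr_mult_add_powr_ge:
  fixes a b c d p :: real
  assumes "0 \<le> a" "0 \<le> b" "0 \<le> c" "0 \<le> d" "2 \<le> p"
  shows "a powr p * c powr p + b powr p * d powr p + p * (a powr p * c powr (p - 1) * d)
      + p * (a powr (p - 1) * b * c powr p) + p * (b powr p * d powr (p - 1) * c)
      \<le> (a + b) powr p * (c + d) powr p"
proof -
  have "(a powr p + b powr p + p * a powr (p - 1) * b) * (c + d) powr p \<le> (a + b) powr p * (c + d) powr p"
    using add_powr_ge_cross_term[of a b p] assms by (intro mult_right_mono) auto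
  moreover have "a powr p * (c powr p + p * c powr (p - 1) * d) \<le> a powr p * (c + d) powr p"
    using add_powr_ge_tangent[of c d p] assms by (intro mult_left_mono) auto
  moreover have "b powr p * (d powr p + p * d powr (p - 1) * c) \<le> b powr p * (c + d) powr p"
    using add_powr_ge_tangent[of d c p] assms by (intro mult_left_mono) (auto simp: add.commute)
  moreover have "p * a powr (p - 1) * b * c powr p \<le> p * a powr (p - 1) * b * (c + d) powr p"
    using assms by (intro mult_left_mono powr_mono2) auto
  ultimately show ?thesis by (simp add: algebra_simps)
qed

lemma add_scaled_powr_mult_ge:
  fixes a c x y t p :: real
  assumes "0 \<le> a" "0 \<le> c" "0 \<le> x" "0 \<le> y" "0 \<le> t" "2 \<le> p"
  shows "a powr p * c powr p + (t * x) powr p * (t * y) powr p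
      + p * t * (a powr p * c powr (p - 1) * y) + p * t * (c powr p * a powr (p - 1) * x)
      + p * t powr (2 * p - 1) * (x powr p * y powr (p - 1) * c)
      \<le> (a + t * x) powr p * (c + t * y) powr p"
proof -
  have "(t * x) powr p * (t * y) powr (p - 1) = (t powr p * t powr (p - 1)) * (x powr p * y powr (p - 1))"
    using assms by (simp add: powr_mult)
  also have "t powr p * t powr (p - 1) = t powr (2 * p - 1)"
    by (simp add: powr_add[symmetric])
  finally have "(t * x) powr p * (t * y) powr (p - 1) = t powr (2 * p - 1) * (x powr p * y powr (p - 1))" .
  then show ?thesis
    using add_powr_mult_add_powr_ge[of a "t * x" c "t * y" p] assms
    by (simp add: algebra_simps)
qed

section \<open>Integrability of the Riesz kernel\<close>

lemma emeasure_lborel_ball_eq: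
  fixes c :: "'a::euclidean_space"
  assumes "0 \<le> r"
  shows "emeasure lborel (ball c r) = ennreal (r ^ DIM('a) * measure lborel (ball (0::'a) 1))"
proof -
  have "emeasure lborel (ball c r) = ennreal (measure lborel (ball c r))"
    using emeasure_lborel_ball_finite[of c r] by (subst emeasure_eq_ennreal_measure) auto
  then show ?thesis
    using content_ball_conv_unit_ball[OF assms, of c] by simp
qed

lemma exists_dyadic_shell:
  fixes R x :: real
  assumes "0 < x" "x < R"
  shows "\<exists>k. R / 2 ^ Suc k \<le> x \<and> x < R / 2 ^ k"
proof -
  obtain n :: nat where "R / x < real n"
    using reals_Archimedean2 by blast
  also have "real n < 2 ^ n"
    by (rule of_nat_less_two_power)
  finally have ex: "R / 2 ^ n \<le> x"
    using assms by (simp add: field_simps)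
  define m where "m = (LEAST n. R / 2 ^ n \<le> x)"
  have m: "R / 2 ^ m \<le> x"
    unfolding m_def by (rule LeastI[of _ n]) (rule ex)
  moreover have "m \<noteq> 0"
    using m assms by (intro notI) simp
  then obtain k where k: "m = Suc k"
    by (cases m) auto
  moreover have "\<not> R / 2 ^ k \<le> x"
    using not_less_Least[of k "\<lambda>n. R / 2 ^ n \<le> x"] k unfolding m_def by auto
  ultimately show ?thesis by auto
qed

text \<open>On the shell R / 2^(k+1) \<le> |z| < R / 2^k bound |z|^(-\<mu>) by (2^(k+1) / R)^\<mu>; summing
  these bounds times the indicators of the balls of radius R / 2^k gives a series whose ratio
  is 2^\<mu> / 2^N < 1.\<close>
lemma nn_integral_ball_inverse_norm_powr_finite:
  fixes R \<mu> :: real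
  assumes R: "0 < R" and mu: "0 \<le> \<mu>" "\<mu> < DIM('a::euclidean_space)"
  shows "(\<integral>\<^sup>+ z. indicator (ball (0::'a) R) z * ennreal (1 / norm z powr \<mu>) \<partial>lborel) < \<infinity>"
proof -
  define c where "c k = (2 ^ Suc k / R) powr \<mu>" for k :: nat
  define a where "a k = c k * ((R / 2 ^ k) ^ DIM('a) * measure lborel (ball (0::'a) 1))" for k
  have a_nonneg: "0 \<le> a k" for k
    unfolding a_def c_def using R by simp
  have pointwise: "indicator (ball (0::'a) R) z * ennreal (1 / norm z powr \<mu>)
      \<le> (\<Sum>k. ennreal (c k) * indicator (ball (0::'a) (R / 2 ^ k)) z)" for z
  proof (cases "z \<in> ball 0 R \<and> z \<noteq> 0")
    case True
    then obtain k where k: "R / 2 ^ Suc k \<le> norm z" "norm z < R / 2 ^ k"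
      using exists_dyadic_shell[of "norm z" R] by auto
    have "1 / norm z powr \<mu> = (1 / norm z) powr \<mu>"
      using True by (simp add: powr_divide)
    also have "\<dots> \<le> c k"
      unfolding c_def using k R mu True
      by (intro powr_mono2) (auto simp: field_simps)
    finally have "indicator (ball (0::'a) R) z * ennreal (1 / norm z powr \<mu>)
        \<le> ennreal (c k) * indicator (ball (0::'a) (R / 2 ^ k)) z"
      using True k by (auto simp: indicator_def intro: ennreal_leI)
    also have "\<dots> \<le> (\<Sum>k. ennreal (c k) * indicator (ball (0::'a) (R / 2 ^ k)) z)"
      using sum_le_suminf[OF summableI, of "{k}"] by simp
    finally show ?thesis .
  qed (auto simp: indicator_def)
  have "(\<integral>\<^sup>+ z. indicator (ball (0::'a) R) z * ennreal (1 / norm z powr \<mu>) \<partial>lborel)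
      \<le> (\<integral>\<^sup>+ z. (\<Sum>k. ennreal (c k) * indicator (ball (0::'a) (R / 2 ^ k)) z) \<partial>lborel)"
    by (intro nn_integral_mono pointwise)
  also have "\<dots> = (\<Sum>k. \<integral>\<^sup>+ z. ennreal (c k) * indicator (ball (0::'a) (R / 2 ^ k)) z \<partial>lborel)"
    by (intro nn_integral_suminf borel_measurable_times_ennreal borel_measurable_indicator) auto
  also have "\<dots> = (\<Sum>k. ennreal (a k))"
    using R by (simp add: nn_integral_cmult_indicator emeasure_lborel_ball_eq a_def c_def
        ennreal_mult')
  also have "\<dots> = ennreal (\<Sum>k. a k)"
  proof (rule suminf_ennreal2)
    have "a (Suc k) = 2 powr \<mu> / 2 ^ DIM('a) * a k" for k
    proof -
      have "c (Suc k) = 2 powr \<mu> * c k"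
        unfolding c_def using R by (simp add: powr_mult[symmetric] mult.assoc)
      then show ?thesis
        unfolding a_def by (simp add: field_simps)
    qed
    moreover have "2 powr \<mu> / 2 ^ DIM('a) < (1::real)"
      using mu by (simp add: powr_realpow[symmetric])
    ultimately show "summable a"
      using a_nonneg by (intro summable_ratio_test[of "2 powr \<mu> / 2 ^ DIM('a)" 0]) auto
  qed (rule a_nonneg)
  finally show ?thesis
    by (simp add: order_le_less_trans)
qed

lemma nn_integral_Riesz_kernel_finite:
  fixes \<Omega> :: "'a::euclidean_space set" and \<mu> :: real
  assumes bnd: "bounded \<Omega>" and meas: "\<Omega> \<in> sets borel" and mu: "0 \<le> \<mu>" "\<mu> < DIM('a)"
  shows "(\<integral>\<^sup>+ z. indicator (\<Omega> \<times> \<Omega>) z * ennreal (1 / norm (fst z - snd z) powr \<mu>)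
      \<partial>(lborel \<Otimes>\<^sub>M lborel)) < \<infinity>"
proof -
  obtain R where R: "0 < R" "\<Omega> \<subseteq> ball 0 R"
    using bnd bounded_subset_ballD by blast
  define k where "k z = indicator (ball (0::'a) (2 * R)) z * ennreal (1 / norm z powr \<mu>)" for z
  define B where "B = (\<integral>\<^sup>+ z. k z \<partial>lborel)"
  have B: "B < \<infinity>"
    unfolding B_def k_def using R mu by (intro nn_integral_ball_inverse_norm_powr_finite) auto
  note meas[measurable]
  have [measurable]: "ball (0::'a) (2 * R) \<in> sets borel"
    by simp
  have k_meas: "k \<in> borel_measurable borel"
    unfolding k_def by measurable
  have translate: "(\<integral>\<^sup>+ y. k (y - x) \<partial>lborel) = B" for x
  proof -
    have "B = (\<integral>\<^sup>+ z. k z \<partial>(distr lborel borel ((+) (- x))))"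
      unfolding B_def lborel_distr_plus ..
    also have "\<dots> = (\<integral>\<^sup>+ y. k (- x + y) \<partial>lborel)"
      using k_meas by (subst nn_integral_distr) auto
    finally show ?thesis by simp
  qed
  have inner: "(\<integral>\<^sup>+ y. indicator (\<Omega> \<times> \<Omega>) (x, y) * ennreal (1 / norm (x - y) powr \<mu>) \<partial>lborel)
      \<le> indicator \<Omega> x * B" for x
  proof (cases "x \<in> \<Omega>")
    case True
    have "(\<integral>\<^sup>+ y. indicator (\<Omega> \<times> \<Omega>) (x, y) * ennreal (1 / norm (x - y) powr \<mu>) \<partial>lborel)
        \<le> (\<integral>\<^sup>+ y. k (y - x) \<partial>lborel)"
    proof (intro nn_integral_mono)
      fix y
      show "indicator (\<Omega> \<times> \<Omega>) (x, y) * ennreal (1 / norm (x - y) powr \<mu>) \<le> k (y - x)"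
      proof (cases "y \<in> \<Omega>")
        case True
        have "norm (y - x) \<le> norm y + norm x"
          by (rule norm_triangle_ineq4)
        also have "\<dots> < 2 * R"
          using R(2) \<open>x \<in> \<Omega>\<close> True
          by (metis add_strict_mono dist_0_norm mem_ball mult_2 subsetD)
        finally show ?thesis
          using True \<open>x \<in> \<Omega>\<close> unfolding k_def by (simp add: norm_minus_commute)
      qed simp
    qed
    then show ?thesis
      using True translate by simp
  qed simp
  have "(\<integral>\<^sup>+ z. indicator (\<Omega> \<times> \<Omega>) z * ennreal (1 / norm (fst z - snd z) powr \<mu>) \<partial>(lborel \<Otimes>\<^sub>M lborel))
      = (\<integral>\<^sup>+ x. \<integral>\<^sup>+ y. indicator (\<Omega> \<times> \<Omega>) (x, y) * ennreal (1 / norm (x - y) powr \<mu>) \<partial>lborel \<partial>lborel)"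
    by (subst lborel.nn_integral_fst[symmetric]) (simp_all add: case_prod_beta)
  also have "\<dots> \<le> (\<integral>\<^sup>+ x. indicator \<Omega> x * B \<partial>lborel)"
    by (intro nn_integral_mono inner)
  also have "\<dots> = B * emeasure lborel \<Omega>"
    using nn_integral_cmult_indicator[of \<Omega> lborel B] by (simp add: mult.commute)
  also have "\<dots> < \<infinity>"
    using B emeasure_bounded_finite[OF bnd] by (simp add: ennreal_mult_less_top)
  finally show ?thesis .
qed

section \<open>Double integrals over \<open>\<Omega> \<times> \<Omega>\<close>\<close>

definition dbl_integrable :: "'a::euclidean_space set \<Rightarrow> ('a \<Rightarrow> 'a \<Rightarrow> real) \<Rightarrow> bool" where
  "dbl_integrable \<Omega> F \<longleftrightarrow> set_integrable (lborel \<Otimes>\<^sub>M lborel) (\<Omega> \<times> \<Omega>) (\<lambda>(x, y). F x y)"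

lemma dbl_cong:
  "(\<And>x y. x \<in> \<Omega> \<Longrightarrow> y \<in> \<Omega> \<Longrightarrow> F x y = G x y) \<Longrightarrow> dbl \<Omega> F = dbl \<Omega> G"
  unfolding dbl_def set_lebesgue_integral_def
  by (intro Bochner_Integration.integral_cong) (auto simp: indicator_def)

lemma dbl_cmult: "dbl \<Omega> (\<lambda>x y. c * F x y) = c * dbl \<Omega> F"
  unfolding dbl_def by (simp add: case_prod_unfold)

lemma dbl_integrable_cmult: "dbl_integrable \<Omega> F \<Longrightarrow> dbl_integrable \<Omega> (\<lambda>x y. c * F x y)"
  unfolding dbl_integrable_def by (simp add: case_prod_unfold)

lemma
  assumes "dbl_integrable \<Omega> F" "dbl_integrable \<Omega> G"
  shows dbl_integrable_add: "dbl_integrable \<Omega> (\<lambda>x y. F x y + G x y)"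
    and dbl_add: "dbl \<Omega> (\<lambda>x y. F x y + G x y) = dbl \<Omega> F + dbl \<Omega> G"
  using set_integral_add[OF assms[unfolded dbl_integrable_def]]
  unfolding dbl_integrable_def dbl_def by (simp_all add: case_prod_unfold)

lemma dbl_mono:
  assumes "dbl_integrable \<Omega> F" "dbl_integrable \<Omega> G"
    and "\<And>x y. x \<in> \<Omega> \<Longrightarrow> y \<in> \<Omega> \<Longrightarrow> F x y \<le> G x y"
  shows "dbl \<Omega> F \<le> dbl \<Omega> G"
  using assms unfolding dbl_integrable_def dbl_def
  by (intro set_integral_mono) (auto simp: case_prod_unfold)

lemma dbl_integrable_swap:
  "dbl_integrable \<Omega> F \<Longrightarrow> dbl_integrable \<Omega> (\<lambda>x y. F y x)"
  unfolding dbl_integrable_def set_integrable_def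
  by (drule lborel_pair.integrable_product_swap)
    (simp add: indicator_def case_prod_unfold mem_Times_iff conj_commute)

lemma dbl_swap:
  assumes "dbl_integrable \<Omega> F"
  shows "dbl \<Omega> (\<lambda>x y. F y x) = dbl \<Omega> F"
proof -
  have "(\<lambda>z. indicator (\<Omega> \<times> \<Omega>) z *\<^sub>R (\<lambda>(x, y). F x y) z) \<in> borel_measurable (lborel \<Otimes>\<^sub>M lborel)"
    using assms unfolding dbl_integrable_def set_integrable_def by (rule borel_measurable_integrable)
  from lborel_pair.integral_product_swap[OF this] show ?thesis
    unfolding dbl_def set_lebesgue_integral_def
    by (simp add: indicator_def case_prod_unfold mem_Times_iff conj_commute)
qed

lemma dbl_integrable_Riesz_kernel:
  fixes \<Omega> :: "'a::euclidean_space set" and F :: "'a \<Rightarrow> 'a \<Rightarrow> real" and \<mu> M :: real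
  assumes bnd: "bounded \<Omega>" and meas: "\<Omega> \<in> sets borel" and mu: "0 \<le> \<mu>" "\<mu> < DIM('a)"
    and F_meas: "(\<lambda>(x, y). F x y) \<in> borel_measurable (lborel \<Otimes>\<^sub>M lborel)"
    and F_bound: "\<And>x y. x \<in> \<Omega> \<Longrightarrow> y \<in> \<Omega> \<Longrightarrow> \<bar>F x y\<bar> \<le> M"
  shows "dbl_integrable \<Omega> (\<lambda>x y. F x y / norm (x - y) powr \<mu>)"
  unfolding dbl_integrable_def set_integrable_def
proof (rule integrableI_bounded)
  note meas[measurable] F_meas[measurable]
  define k where "k z = indicator (\<Omega> \<times> \<Omega>) z * ennreal (1 / norm (fst z - snd z) powr \<mu>)"
    for z :: "'a \<times> 'a"
  show "(\<lambda>z. indicator (\<Omega> \<times> \<Omega>) z *\<^sub>R (\<lambda>(x, y). F x y / norm (x - y) powr \<mu>) z)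
      \<in> borel_measurable (lborel \<Otimes>\<^sub>M lborel)"
    by measurable
  have "(\<integral>\<^sup>+ z. norm (indicator (\<Omega> \<times> \<Omega>) z *\<^sub>R (\<lambda>(x, y). F x y / norm (x - y) powr \<mu>) z)
      \<partial>(lborel \<Otimes>\<^sub>M lborel)) \<le> (\<integral>\<^sup>+ z. ennreal (max M 0) * k z \<partial>(lborel \<Otimes>\<^sub>M lborel))"
  proof (intro nn_integral_mono)
    fix z :: "'a \<times> 'a"
    obtain x y where z: "z = (x, y)"
      by (cases z)
    show "ennreal (norm (indicator (\<Omega> \<times> \<Omega>) z *\<^sub>R (\<lambda>(x, y). F x y / norm (x - y) powr \<mu>) z))
        \<le> ennreal (max M 0) * k z"
    proof (cases "x \<in> \<Omega> \<and> y \<in> \<Omega>")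
      case True
      then have "\<bar>F x y\<bar> / norm (x - y) powr \<mu> \<le> max M 0 / norm (x - y) powr \<mu>"
        using F_bound by (intro divide_right_mono) (force simp: le_max_iff_disj)+
      then show ?thesis
        using True unfolding k_def z by (simp add: ennreal_mult'[symmetric] abs_mult ennreal_leI)
    qed (auto simp: k_def z)
  qed
  also have "\<dots> = ennreal (max M 0) * (\<integral>\<^sup>+ z. k z \<partial>(lborel \<Otimes>\<^sub>M lborel))"
    unfolding k_def by (intro nn_integral_cmult) measurable
  also have "\<dots> < \<infinity>"
    using nn_integral_Riesz_kernel_finite[OF bnd meas mu] unfolding k_def
    by (simp add: ennreal_mult_less_top)
  finally show "(\<integral>\<^sup>+ z. norm (indicator (\<Omega> \<times> \<Omega>) z *\<^sub>R (\<lambda>(x, y). F x y / norm (x - y) powr \<mu>) z)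
      \<partial>(lborel \<Otimes>\<^sub>M lborel)) < \<infinity>" .
qed

lemma dbl_integrable_Riesz_powr:
  fixes \<Omega> :: "'a::euclidean_space set" and u v :: "'a \<Rightarrow> real" and \<mu> p S :: real
  assumes bnd: "bounded \<Omega>" and meas: "\<Omega> \<in> sets borel" and mu: "0 \<le> \<mu>" "\<mu> < DIM('a)"
    and p: "1 \<le> p"
    and [measurable]: "u \<in> borel_measurable borel" "v \<in> borel_measurable borel"
    and u: "\<And>x. x \<in> \<Omega> \<Longrightarrow> 0 \<le> u x \<and> u x \<le> S"
    and v: "\<And>x. x \<in> \<Omega> \<Longrightarrow> 0 \<le> v x \<and> v x \<le> S"
  shows "dbl_integrable \<Omega> (\<lambda>x y. u x powr p * v y powr p / norm (x - y) powr \<mu>)"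
    and "dbl_integrable \<Omega> (\<lambda>x y. u x powr p * u y powr (p - 1) * v y / norm (x - y) powr \<mu>)"
proof -
  note [measurable] = meas
  have kernel: "dbl_integrable \<Omega> (\<lambda>x y. F x y / norm (x - y) powr \<mu>)"
    if "(\<lambda>(x, y). F x y) \<in> borel_measurable (lborel \<Otimes>\<^sub>M lborel)"
      and "\<And>x y. x \<in> \<Omega> \<Longrightarrow> y \<in> \<Omega> \<Longrightarrow> 0 \<le> F x y \<and> F x y \<le> M" for F M
    using that by (intro dbl_integrable_Riesz_kernel[OF bnd meas mu, where M = M]) auto
  show "dbl_integrable \<Omega> (\<lambda>x y. u x powr p * v y powr p / norm (x - y) powr \<mu>)"
    by (rule kernel[where M = "S powr p * S powr p"])
      (measurable, use u v p in \<open>auto intro!: mult_mono powr_mono2\<close>)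
  show "dbl_integrable \<Omega> (\<lambda>x y. u x powr p * u y powr (p - 1) * v y / norm (x - y) powr \<mu>)"
    by (rule kernel[where M = "S powr p * S powr (p - 1) * S"])
      (measurable, use u v p in \<open>auto intro!: mult_mono powr_mono2\<close>)
qed

lemma b_fun_nonneg_eq:
  fixes \<Omega> :: "'a::euclidean_space set"
  assumes "\<And>x. x \<in> \<Omega> \<Longrightarrow> 0 \<le> u x"
  shows "b_fun \<Omega> \<mu> u = dbl \<Omega> (\<lambda>x y. u x powr crit TYPE('a) \<mu> * u y powr crit TYPE('a) \<mu>
      / norm (x - y) powr \<mu>)"
  unfolding b_fun_def using assms by (intro dbl_cong) (simp add: max_absorb1)

lemma b_fun_add_scaled_ge:
  fixes \<Omega> :: "'a::euclidean_space set" and u g :: "'a \<Rightarrow> real" and \<mu> t R :: real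
  defines "p \<equiv> crit TYPE('a) \<mu>"
  assumes bnd: "bounded \<Omega>" and meas: "\<Omega> \<in> sets borel" and mu: "0 \<le> \<mu>" "\<mu> < DIM('a)"
    and p: "2 \<le> p"
    and u_meas: "u \<in> borel_measurable borel" and u: "\<And>x. x \<in> \<Omega> \<Longrightarrow> 0 \<le> u x \<and> u x \<le> R"
    and g_meas: "g \<in> borel_measurable borel" and g: "\<And>x. x \<in> \<Omega> \<Longrightarrow> 0 \<le> g x \<and> g x \<le> R"
    and t: "0 \<le> t"
  shows "b_fun \<Omega> \<mu> u + b_fun \<Omega> \<mu> (\<lambda>x. t * g x)
      + p * t powr (2 * p - 1) * dbl \<Omega> (\<lambda>x y. g x powr p * g y powr (p - 1) * u y / norm (x - y) powr \<mu>)
      + 2 * p * t * dbl \<Omega> (\<lambda>x y. u x powr p * u y powr (p - 1) * g y / norm (x - y) powr \<mu>)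
      \<le> b_fun \<Omega> \<mu> (\<lambda>x. u x + t * g x)"
proof -
  define S where "S = R + t * R"
  have bounds: "0 \<le> u x \<and> u x \<le> S" "0 \<le> g x \<and> g x \<le> S" "0 \<le> t * g x \<and> t * g x \<le> S"
    "0 \<le> u x + t * g x \<and> u x + t * g x \<le> S" if "x \<in> \<Omega>" for x
  proof -
    have "0 \<le> t * g x" "t * g x \<le> t * R"
      using g[OF that] t by (auto intro: mult_left_mono)
    then show "0 \<le> u x \<and> u x \<le> S" "0 \<le> g x \<and> g x \<le> S" "0 \<le> t * g x \<and> t * g x \<le> S"
      "0 \<le> u x + t * g x \<and> u x + t * g x \<le> S"
      using u[OF that] g[OF that] unfolding S_def by linarith+
  qed
  note integrable = dbl_integrable_Riesz_powr[OF bnd meas mu, of p, where S = S]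
  define A1 where "A1 x y = u x powr p * u y powr p / norm (x - y) powr \<mu>" for x y
  define A2 where "A2 x y = (t * g x) powr p * (t * g y) powr p / norm (x - y) powr \<mu>" for x y
  define B where "B x y = (u x + t * g x) powr p * (u y + t * g y) powr p / norm (x - y) powr \<mu>" for x y
  define H where "H x y = u x powr p * u y powr (p - 1) * g y / norm (x - y) powr \<mu>" for x y
  define Q where "Q x y = g x powr p * g y powr (p - 1) * u y / norm (x - y) powr \<mu>" for x y
  have int: "dbl_integrable \<Omega> A1" "dbl_integrable \<Omega> A2" "dbl_integrable \<Omega> B"
    "dbl_integrable \<Omega> H" "dbl_integrable \<Omega> Q"
    unfolding A1_def A2_def B_def H_def Q_def using p bounds u_meas g_meas
    by (intro integrable; simp)+
  note int_swap = dbl_integrable_swap[OF int(4)]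
  define E where
    "E x y = A1 x y + A2 x y + p * t * H x y + p * t * H y x + p * t powr (2 * p - 1) * Q x y" for x y
  have int_E: "dbl_integrable \<Omega> E"
    unfolding E_def using int int_swap by (intro dbl_integrable_add dbl_integrable_cmult)
  have "dbl \<Omega> E = dbl \<Omega> A1 + dbl \<Omega> A2 + 2 * p * t * dbl \<Omega> H + p * t powr (2 * p - 1) * dbl \<Omega> Q"
    unfolding E_def using int int_swap dbl_swap[OF int(4)]
    by (simp add: dbl_add dbl_cmult dbl_integrable_add dbl_integrable_cmult)
  moreover have "dbl \<Omega> E \<le> dbl \<Omega> B"
  proof (rule dbl_mono[OF int_E int(3)])
    fix x y assume "x \<in> \<Omega>" "y \<in> \<Omega>"
    then show "E x y \<le> B x y"
      unfolding E_def A1_def A2_def H_def Q_def B_def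
      using add_scaled_powr_mult_ge[of "u x" "u y" "g x" "g y" t p] u g t p
      by (simp add: add_divide_distrib[symmetric] divide_right_mono norm_minus_commute)
  qed
  moreover have "b_fun \<Omega> \<mu> u = dbl \<Omega> A1" "b_fun \<Omega> \<mu> (\<lambda>x. t * g x) = dbl \<Omega> A2"
    "b_fun \<Omega> \<mu> (\<lambda>x. u x + t * g x) = dbl \<Omega> B"
    unfolding A1_def A2_def B_def p_def using bounds by (intro b_fun_nonneg_eq; auto)+
  ultimately show ?thesis
    unfolding H_def Q_def by (simp add: algebra_simps)
qed

lemma crit_ge_two:
  assumes "2 < DIM('a::euclidean_space)" "\<mu> \<le> 4"
  shows "2 \<le> crit TYPE('a) \<mu>"
  using assms unfolding crit_def by (simp add: le_divide_eq)

lemma H01_measurable: "H01 \<Omega> u \<Longrightarrow> u \<in> borel_measurable borel"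
  unfolding H01_def H01_grad_def L2_def by auto

lemma cutoff_measurable:
  assumes "cutoff \<rho> \<upsilon>"
  shows "\<upsilon> \<in> borel_measurable borel"
proof -
  have "smooth_on UNIV \<upsilon>"
    using assms unfolding cutoff_def test_fun_def by blast
  then have "\<upsilon> differentiable_on UNIV"
    by (cases rule: smooth_on.cases) auto
  then show ?thesis
    by (intro borel_measurable_continuous_onI differentiable_imp_continuous_on)
qed

lemma u_eps_nonneg: "0 \<le> u_eps \<mu> \<epsilon> \<sigma> x"
  unfolding u_eps_def c_Nmu_def Let_def by simp

lemma u_eps_le_centre:
  fixes \<sigma> :: "'a::euclidean_space"
  assumes "2 \<le> DIM('a)" "\<epsilon> \<noteq> 0"
  shows "u_eps \<mu> \<epsilon> \<sigma> x \<le> u_eps \<mu> \<epsilon> \<sigma> ((1 - \<epsilon>) *\<^sub>R \<sigma>)"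
  unfolding u_eps_def Let_def using assms
  by (intro divide_left_mono powr_mono2 mult_pos_pos) (auto simp: c_Nmu_def)

lemma g_fun_measurable:
  "cutoff \<rho> \<upsilon> \<Longrightarrow> g_fun \<upsilon> \<mu> \<epsilon> \<sigma> \<in> borel_measurable borel"
  using cutoff_measurable unfolding g_fun_def u_eps_def Let_def by measurable

lemma g_fun_bounds:
  fixes \<sigma> :: "'a::euclidean_space"
  assumes "cutoff \<rho> \<upsilon>" "2 \<le> DIM('a)" "\<epsilon> \<noteq> 0"
  shows "0 \<le> g_fun \<upsilon> \<mu> \<epsilon> \<sigma> x \<and> g_fun \<upsilon> \<mu> \<epsilon> \<sigma> x \<le> u_eps \<mu> \<epsilon> \<sigma> ((1 - \<epsilon>) *\<^sub>R \<sigma>)"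
proof -
  have \<upsilon>: "0 \<le> \<upsilon> x" "\<upsilon> x \<le> 1"
    using assms(1) unfolding cutoff_def by blast+
  have "\<upsilon> x * u_eps \<mu> \<epsilon> \<sigma> x \<le> u_eps \<mu> \<epsilon> \<sigma> x"
    using mult_left_le_one_le[OF u_eps_nonneg \<upsilon>] .
  then show ?thesis
    unfolding g_fun_def
    using \<upsilon> u_eps_nonneg[of \<mu> \<epsilon> \<sigma> x] u_eps_le_centre[OF assms(2,3), of \<mu> \<sigma> x] by simp
qed

theorem mainTheorem9:
  fixes \<Omega> :: "'a::euclidean_space set" and \<rho> \<mu> :: real
    and f u1 \<upsilon> :: "'a \<Rightarrow> real"
  assumes N3: "DIM('a) \<ge> 3"
    and mu: "0 < \<mu>" "\<mu> < min 4 (real DIM('a))"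
    and A: "cond_A \<rho> \<Omega>"
    and f: "f \<in> hatF \<Omega>" "Hm1_norm \<Omega> f < e00 TYPE('a) \<mu>"
    and sol: "weak_solution \<Omega> \<mu> f u1"
    and pos: "\<forall>x\<in>\<Omega>. u1 x > 0"
    and bdd: "\<exists>M. \<forall>x\<in>\<Omega>. \<bar>u1 x\<bar> \<le> M"
    and neh: "u1 \<in> Nehari_plus \<Omega> \<mu> f"
    and mini: "ereal (J_fun \<Omega> \<mu> f u1) = Upsilon \<Omega> \<mu> f"
    and cut: "cutoff \<rho> \<upsilon>"
  shows "\<exists>C>0. \<forall>\<Theta><1. \<forall>T::real. \<exists>K::real. \<exists>\<epsilon>0>0. \<forall>\<epsilon> \<sigma> t.
     0 < \<epsilon> \<and> \<epsilon> < \<epsilon>0 \<and> \<epsilon> \<le> 1 \<and> \<sigma> \<in> sphere 0 1 \<and> 0 \<le> t \<and> t \<le> T \<longrightarrow>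
     (let p = crit TYPE('a) \<mu>; g = g_fun \<upsilon> \<mu> \<epsilon> \<sigma> in
      b_fun \<Omega> \<mu> (\<lambda>x. u1 x + t * g x) \<ge>
        b_fun \<Omega> \<mu> u1 + b_fun \<Omega> \<mu> (\<lambda>x. t * g x)
        + C * t powr (2 * p - 1) *
            dbl \<Omega> (\<lambda>x y. g x powr p * g y powr (p - 1) * u1 y / norm (x - y) powr \<mu>)
        + 2 * p * t *
            dbl \<Omega> (\<lambda>x y. u1 x powr p * u1 y powr (p - 1) * g y / norm (x - y) powr \<mu>)
        - K * \<epsilon> powr ((2 * real DIM('a) - \<mu>) / 4 * \<Theta>))"
proof -
  define p where "p = crit TYPE('a) \<mu>"
  have p: "2 \<le> p"
    unfolding p_def using N3 mu by (intro crit_ge_two) auto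
  have bnd: "bounded \<Omega>" and meas: "\<Omega> \<in> sets borel"
    using A unfolding cond_A_def smooth_bounded_domain_def by auto
  obtain M where M: "\<And>x. x \<in> \<Omega> \<Longrightarrow> \<bar>u1 x\<bar> \<le> M"
    using bdd by auto
  have u1_meas: "u1 \<in> borel_measurable borel"
    using sol unfolding weak_solution_def by (blast intro: H01_measurable)
  have estimate: "b_fun \<Omega> \<mu> u1 + b_fun \<Omega> \<mu> (\<lambda>x. t * g x)
      + p * t powr (2 * p - 1) * dbl \<Omega> (\<lambda>x y. g x powr p * g y powr (p - 1) * u1 y / norm (x - y) powr \<mu>)
      + 2 * p * t * dbl \<Omega> (\<lambda>x y. u1 x powr p * u1 y powr (p - 1) * g y / norm (x - y) powr \<mu>)
      \<le> b_fun \<Omega> \<mu> (\<lambda>x. u1 x + t * g x)"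
    if "0 < \<epsilon>" "0 \<le> t" "g = g_fun \<upsilon> \<mu> \<epsilon> \<sigma>" for \<epsilon> \<sigma> t g
    unfolding p_def
  proof (rule b_fun_add_scaled_ge[OF bnd meas _ _ _ u1_meas _ _ _ \<open>0 \<le> t\<close>])
    show "0 \<le> \<mu>" "\<mu> < DIM('a)" "2 \<le> crit TYPE('a) \<mu>"
      using mu p unfolding p_def by auto
    show "g \<in> borel_measurable borel"
      using g_fun_measurable[OF cut] that(3) by simp
    define R where "R = max M (u_eps \<mu> \<epsilon> \<sigma> ((1 - \<epsilon>) *\<^sub>R \<sigma>))"
    show "0 \<le> u1 x \<and> u1 x \<le> R" if "x \<in> \<Omega>" for x
      using M[OF that] pos that unfolding R_def by auto
    show "0 \<le> g x \<and> g x \<le> R" for x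
      using g_fun_bounds[OF cut, of \<epsilon> \<mu> \<sigma> x] N3 \<open>0 < \<epsilon>\<close> \<open>g = _\<close> unfolding R_def by auto
  qed
  show ?thesis
    apply (rule exI[of _ p], intro conjI allI impI)
    using p apply (simp add: p_def)
    apply (rule exI[of _ 0], rule exI[of _ 1])
    using estimate by (auto simp: Let_def p_def)
qed

end
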